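(* In the certification market, the welfare-optimal menu of certificates offers every threshold certification level $q\in(0,1]$ at transfer $c$ and level $0$ at transfer $0$; i.e., this menu maximizes $\operatorname{Wel}(M)$ over all menus $M$.
   Context: Certification market: producers with types $\psi$ (atomless distribution $G$, compact support), consumers with types $\phi$ (atomless distribution $F$, compact support), quality $q\in[0,1]$; cost $g(q;\psi)$ weakly convex non-decreasing in $q$, $g(0;\psi)=0$; value $f(q;\phi)$ weakly concave non-decreasing in $q$, $f(0;\phi)=0$, $0\le f\le1$; strict single-crossing: for $\phi_1<\phi_2$, $q_1<q_2$: $f(q_2;\phi_2)-f(q_1;\phi_2)>f(q_2;\phi_1)-f(q_1;\phi_1)$, and for $\psi_1<\psi_2$, $q_1<q_2$: $g(q_2;\psi_2)-g(q_1;\psi_2)<g(q_2;\psi_1)-g(q_1;\psi_1)$. Quality is unobservable to consumers except through certificates. The certifier offers a menu $M=\{(q_i,t_i)\}$ of threshold certificates $[q_i,1]$ with transfers $t_i$ (always including $(0,0)$) and incurs a verification cost $c\ge0$ for each non-trivial certificate issued; a producer choosing threshold $q_i$ produces at quality $q_i$. Producers choose certificates in equilibrium and trade with consumers in a competitive (Walrasian) market equilibrium; in equilibrium, producer $\psi$ trades with consumer $\phi(\psi)$ defined by $F(\phi(\psi))=G(\psi)$ and picks the menu item maximizing $f(q_i;\phi(\psi))-g(q_i;\psi)-t_i$. $\operatorname{Wel}(M)$ is the sum of utilities of consumers, producers and the certifier (the certifier's utility being transfers received minus verification costs) in the equilibrium outcome under $M$; transfers cancel, so $\operatorname{Wel}(M)=\int[f(q(\psi);\phi(\psi))-g(q(\psi);\psi)-c\cdot\mathbf{1}\{q(\psi)>0\}]\,dG(\psi)$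 where $q(\psi)$ is the level chosen by $\psi$. *)

theory Defs
  imports "HOL-Probability.Probability"
begin

text \<open>Types of producers (psi) and consumers (phi) are reals; their distributions
are Borel probability measures on the reals.
Cost g q psi, value f q phi. A menu is a set of pairs (q, t) of a threshold level
and a transfer.\<close>

definition cdf :: "real measure \<Rightarrow> real \<Rightarrow> real" where
  "cdf D x = measure D {..x}"

definition type_distribution :: "real measure \<Rightarrow> bool" where
  "type_distribution D \<longleftrightarrow>
     prob_space D \<and> sets D = sets borel \<and>
     (\<forall>x. measure D {x} = 0) \<and>
     (\<exists>K. compact K \<and> measure D K = 1)"

definition is_menu :: "(real \<times> real) set \<Rightarrow> bool" where
  "is_menu M \<longleftrightarrow> (0, 0) \<in> M \<and> (\<forall>m\<in>M. 0 \<le> fst m \<and> fst m \<le> 1)"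

definition full_menu :: "real \<Rightarrow> (real \<times> real) set" where
  "full_menu c = {(q, c) | q. 0 < q \<and> q \<le> 1} \<union> {(0, 0)}"

definition producer_payoff ::
  "(real \<Rightarrow> real \<Rightarrow> real) \<Rightarrow> (real \<Rightarrow> real \<Rightarrow> real) \<Rightarrow> (real \<Rightarrow> real)
    \<Rightarrow> real \<Rightarrow> real \<times> real \<Rightarrow> real" where
  "producer_payoff f g phi psi m = f (fst m) (phi psi) - g (fst m) psi - snd m"

text \<open>An equilibrium choice rule under menu M: (almost) every producer type picks
an item of M maximizing its payoff against its matched consumer phi psi.\<close>
definition equilibrium_choice ::
  "real measure \<Rightarrow> (real \<Rightarrow> real \<Rightarrow> real) \<Rightarrow> (real \<Rightarrow> real \<Rightarrow> real) \<Rightarrow> (real \<Rightarrow> real)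
    \<Rightarrow> (real \<times> real) set \<Rightarrow> (real \<Rightarrow> real \<times> real) \<Rightarrow> bool" where
  "equilibrium_choice G f g phi M s \<longleftrightarrow>
     (AE psi in G. s psi \<in> M \<and>
        (\<forall>m\<in>M. producer_payoff f g phi psi m \<le> producer_payoff f g phi psi (s psi)))"

definition welfare_density ::
  "(real \<Rightarrow> real \<Rightarrow> real) \<Rightarrow> (real \<Rightarrow> real \<Rightarrow> real) \<Rightarrow> real \<Rightarrow> (real \<Rightarrow> real)
    \<Rightarrow> (real \<Rightarrow> real \<times> real) \<Rightarrow> real \<Rightarrow> real" where
  "welfare_density f g c phi s psi =
     f (fst (s psi)) (phi psi) - g (fst (s psi)) psi - (if fst (s psi) > 0 then c else 0)"

definition Wel ::
  "real measure \<Rightarrow> (real \<Rightarrow> real \<Rightarrow> real) \<Rightarrow> (real \<Rightarrow> real \<Rightarrow> real) \<Rightarrow> real \<Rightarrow> (real \<Rightarrow> real)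
    \<Rightarrow> (real \<Rightarrow> real \<times> real) \<Rightarrow> real" where
  "Wel G f g c phi s = (\<integral>psi. welfare_density f g c phi s psi \<partial>G)"

end

theory Submission
  imports Defs
begin

text \<open>Under the full menu every non-trivial certificate costs exactly the verification cost c,
  so a producer's payoff from any item coincides with the welfare it generates. A producer
  best-responding to the full menu therefore picks a welfare-maximizing level among all of
  [0,1], which pointwise dominates whatever level it would choose under any other menu;
  integrating gives the claim.\<close>

lemma welfare_density_eq_producer_payoff_full_menu:
  assumes "s psi \<in> full_menu c"
    and "f 0 (phi psi) = 0" and "g 0 psi = 0"
  shows "welfare_density f g c phi s psi = producer_payoff f g phi psi (s psi)"
  using assms by (auto simp: full_menu_def welfare_density_def producer_payoff_def)

lemma welfare_density_le_full_menu_best_response: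
  assumes opt_in: "s_opt psi \<in> full_menu c"
    and opt_max: "\<And>m. m \<in> full_menu c \<Longrightarrow>
                    producer_payoff f g phi psi m \<le> producer_payoff f g phi psi (s_opt psi)"
    and level: "0 \<le> fst (s psi)" "fst (s psi) \<le> 1"
    and f_zero: "f 0 (phi psi) = 0" and g_zero: "g 0 psi = 0"
  shows "welfare_density f g c phi s psi \<le> welfare_density f g c phi s_opt psi"
proof -
  have "welfare_density f g c phi s psi \<le> producer_payoff f g phi psi (s_opt psi)"
  proof (cases "fst (s psi) > 0")
    case True
    with level have "(fst (s psi), c) \<in> full_menu c"
      by (auto simp: full_menu_def)
    from opt_max[OF this] True show ?thesis
      by (simp add: welfare_density_def producer_payoff_def)
  next
    case False
    with level have "fst (s psi) = 0" by simp
    moreover have "(0, 0) \<in> full_menu c" by (simp add: full_menu_def)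
    from opt_max[OF this] have "0 \<le> producer_payoff f g phi psi (s_opt psi)"
      by (simp add: producer_payoff_def f_zero g_zero)
    ultimately show ?thesis
      by (simp add: welfare_density_def f_zero g_zero)
  qed
  also have "\<dots> = welfare_density f g c phi s_opt psi"
    using opt_in f_zero g_zero by (rule welfare_density_eq_producer_payoff_full_menu[symmetric])
  finally show ?thesis .
qed

theorem theorem2:
  fixes G F :: "real measure"
    and f g :: "real \<Rightarrow> real \<Rightarrow> real"
    and phi :: "real \<Rightarrow> real"
    and c :: real
    and M :: "(real \<times> real) set"
    and s s_opt :: "real \<Rightarrow> real \<times> real"
  assumes G: "type_distribution G"
    and F: "type_distribution F"
    and match: "\<And>psi. cdf F (phi psi) = cdf G psi"
    and g_convex: "\<And>psi. convex_on {0..1} (\<lambda>q. g q psi)"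
    and g_mono: "\<And>psi. mono_on {0..1} (\<lambda>q. g q psi)"
    and g_zero: "\<And>psi. g 0 psi = 0"
    and f_concave: "\<And>ph. concave_on {0..1} (\<lambda>q. f q ph)"
    and f_mono: "\<And>ph. mono_on {0..1} (\<lambda>q. f q ph)"
    and f_zero: "\<And>ph. f 0 ph = 0"
    and f_bounds: "\<And>q ph. q \<in> {0..1} \<Longrightarrow> 0 \<le> f q ph \<and> f q ph \<le> 1"
    and f_sc: "\<And>ph1 ph2 q1 q2. ph1 < ph2 \<Longrightarrow> 0 \<le> q1 \<Longrightarrow> q1 < q2 \<Longrightarrow> q2 \<le> 1 \<Longrightarrow>
                 f q2 ph2 - f q1 ph2 > f q2 ph1 - f q1 ph1"
    and g_sc: "\<And>ps1 ps2 q1 q2. ps1 < ps2 \<Longrightarrow> 0 \<le> q1 \<Longrightarrow> q1 < q2 \<Longrightarrow> q2 \<le> 1 \<Longrightarrow>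
                 g q2 ps2 - g q1 ps2 < g q2 ps1 - g q1 ps1"
    and c_nonneg: "c \<ge> 0"
    and M: "is_menu M"
    and s_eq: "equilibrium_choice G f g phi M s"
    and s_int: "integrable G (welfare_density f g c phi s)"
    and opt_eq: "equilibrium_choice G f g phi (full_menu c) s_opt"
    and opt_int: "integrable G (welfare_density f g c phi s_opt)"
  shows "Wel G f g c phi s \<le> Wel G f g c phi s_opt"
proof -
  have "AE psi in G. welfare_density f g c phi s psi \<le> welfare_density f g c phi s_opt psi"
    using s_eq opt_eq unfolding equilibrium_choice_def
  proof eventually_elim
    case (elim psi)
    then have "0 \<le> fst (s psi)" "fst (s psi) \<le> 1"
      using M by (auto simp: is_menu_def)
    with elim show ?case
      by (intro welfare_density_le_full_menu_best_response f_zero g_zero) auto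
  qed
  then show ?thesis
    unfolding Wel_def by (rule integral_mono_AE[OF s_int opt_int])
qed

end
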